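(* Let $(\Omega,\mathcal{F},\Pr)$ be a probability space and let $Y_i\colon\Omega\to\mathbb{R}$ and $W_i\colon\Omega\to\{0,1\}$, $i\ge 1$, be random variables. Define $X_i=(1-2W_i)Y_i$ and $S_n=\sum_{i=1}^n X_i$ for $n\ge 1$. Suppose that Assumption 1 holds, i.e. the experiment subjects generating the events are assigned to control or treatment uniformly at random with equal probability. Suppose also that the null hypothesis holds: (a) the families $\{Y_1,Y_2,\ldots\}$ and $\{W_1,W_2,\ldots\}$ are independent of each other, and (b) $\Pr\{W_i=1\}=0.5$ for all $i\ge 1$. Then for any $N\ge 1$ and any $k\in\{1,\ldots,N\}$, the conditional distribution of $S_N-S_k$ given $S_1,\ldots,S_k$ is symmetric around $0$.
   Context: Setting: a randomised experiment with a control group and a treatment group. Subjects (e.g. users) generate a stream of events (e.g. orders). For the $i$-th event, $Y_i$ is its outcome (e.g. order value) and $W_i$ is its assignment indicator ($W_i=0$ if the event was generated by a subject in the control group, $W_i=1$ if by a subject in the treatment group). Thus $S_n$ is the difference (control minus treatment) in the accumulated metric after $n$ events. The variables $Y_i$ may be dependent among themselves and need not be identically distributed; likewise the $W_i$ may be dependent among themselves (events of the same subject). Under Assumption 1 together with the null hypothesis, for every sign pattern of the assignments of any block of events, the pattern and its negation have equal probability. *)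

theory Defs
  imports "HOL-Probability.Probability"
begin

definition Xev :: "(nat \<Rightarrow> 'a \<Rightarrow> real) \<Rightarrow> (nat \<Rightarrow> 'a \<Rightarrow> real) \<Rightarrow> nat \<Rightarrow> 'a \<Rightarrow> real" where
  "Xev Y W i \<omega> = (1 - 2 * W i \<omega>) * Y i \<omega>"

definition Ssum :: "(nat \<Rightarrow> 'a \<Rightarrow> real) \<Rightarrow> (nat \<Rightarrow> 'a \<Rightarrow> real) \<Rightarrow> nat \<Rightarrow> 'a \<Rightarrow> real" where
  "Ssum Y W n \<omega> = (\<Sum>i\<in>{1..n}. Xev Y W i \<omega>)"

text \<open>Assumption 1 (with the null hypothesis): for every n, every block of events {a..b}
  within {1..n} and every 0/1 pattern w of the assignments W_1..W_n, the pattern and the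
  pattern negated on the block have equal probability.\<close>
definition assumption1 :: "'a measure \<Rightarrow> (nat \<Rightarrow> 'a \<Rightarrow> real) \<Rightarrow> bool" where
  "assumption1 M W \<longleftrightarrow>
     (\<forall>n a b (w::nat \<Rightarrow> real). 1 \<le> a \<and> b \<le> n \<and> (\<forall>i. w i \<in> {0,1}) \<longrightarrow>
        measure M {\<omega>\<in>space M. \<forall>i\<in>{1..n}. W i \<omega> = w i} =
        measure M {\<omega>\<in>space M. \<forall>i\<in>{1..n}. W i \<omega> = (if a \<le> i \<and> i \<le> b then 1 - w i else w i)})"

definition sigmaS :: "'a measure \<Rightarrow> (nat \<Rightarrow> 'a \<Rightarrow> real) \<Rightarrow> (nat \<Rightarrow> 'a \<Rightarrow> real) \<Rightarrow> nat \<Rightarrow> 'a measure" where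
  "sigmaS M Y W k = vimage_algebra (space M) (\<lambda>\<omega>. \<lambda>i\<in>{1..k}. Ssum Y W i \<omega>) (PiM {1..k} (\<lambda>_. borel))"

end

theory Submission
  imports Defs
begin

text \<open>Flip the assignments of all events after the k-th, \<open>W\<^sub>i \<mapsto> 1 - W\<^sub>i\<close> for \<open>i > k\<close>. This
  leaves \<open>S\<^sub>1, \<dots>, S\<^sub>k\<close> unchanged and negates \<open>S\<^sub>N - S\<^sub>k\<close>. By Assumption 1 the flip preserves
  the law of \<open>(W\<^sub>1, \<dots>, W\<^sub>N)\<close>, and since the outcomes are independent of the assignments it
  also preserves the joint law of \<open>(Y\<^sub>1, \<dots>, Y\<^sub>N, W\<^sub>1, \<dots>, W\<^sub>N)\<close>. Hence
  \<open>(S\<^sub>1, \<dots>, S\<^sub>k, S\<^sub>N - S\<^sub>k)\<close> and \<open>(S\<^sub>1, \<dots>, S\<^sub>k, -(S\<^sub>N - S\<^sub>k))\<close> have the same law, which means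
  that \<open>S\<^sub>N - S\<^sub>k\<close> and its negation have the same conditional law given \<open>S\<^sub>1, \<dots>, S\<^sub>k\<close>.\<close>

lemma distr_eq_of_finite_values:
  assumes X: "X \<in> measurable M N" and Z: "Z \<in> measurable M N"
    and S: "finite S" "X ` space M \<subseteq> S" "Z ` space M \<subseteq> S" "\<And>s. s \<in> S \<Longrightarrow> {s} \<in> sets N"
    and eq: "\<And>s. s \<in> S \<Longrightarrow>
      emeasure M {\<omega>\<in>space M. X \<omega> = s} = emeasure M {\<omega>\<in>space M. Z \<omega> = s}"
  shows "distr M N X = distr M N Z"
proof -
  have sum: "emeasure M (U -` A \<inter> space M) = (\<Sum>s\<in>A \<inter> S. emeasure M {\<omega>\<in>space M. U \<omega> = s})"
    if U: "U \<in> measurable M N" "U ` space M \<subseteq> S" for U A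
  proof -
    have "U -` A \<inter> space M = (\<Union>s\<in>A \<inter> S. {\<omega>\<in>space M. U \<omega> = s})"
      using U(2) by auto
    moreover have "{\<omega>\<in>space M. U \<omega> = s} \<in> sets M" if "s \<in> S" for s
      using measurable_sets[OF U(1) S(4)[OF that]] by (simp add: vimage_def Int_def conj_commute)
    ultimately show ?thesis
      using S(1) by (auto intro!: sum_emeasure[symmetric] simp: disjoint_family_on_def)
  qed
  show ?thesis
    using X Z S(2,3) by (intro measure_eqI) (simp_all add: emeasure_distr sum eq)
qed

lemma (in prob_space) real_cond_exp_indicator_eq_of_distr_pair_eq:
  assumes V: "V \<in> measurable M Q" and Z: "Z \<in> measurable M T" and Z': "Z' \<in> measurable M T"
    and law: "distr M (Q \<Otimes>\<^sub>M T) (\<lambda>\<omega>. (V \<omega>, Z \<omega>)) = distr M (Q \<Otimes>\<^sub>M T) (\<lambda>\<omega>. (V \<omega>, Z' \<omega>))"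
    and B: "B \<in> sets T"
  shows "AE \<omega> in M.
    real_cond_exp M (vimage_algebra (space M) V Q) (indicator {\<omega>\<in>space M. Z \<omega> \<in> B}) \<omega> =
    real_cond_exp M (vimage_algebra (space M) V Q) (indicator {\<omega>\<in>space M. Z' \<omega> \<in> B}) \<omega>"
proof -
  let ?F = "vimage_algebra (space M) V Q"
  have "subalgebra M ?F"
    using sets_image_in_sets[OF refl V] by (simp add: subalgebra_def)
  then interpret finite_measure_subalgebra M ?F
    by unfold_locales
  have set_integral: "(\<integral>\<omega>\<in>V -` C \<inter> space M. indicator {\<omega>\<in>space M. U \<omega> \<in> B} \<omega> \<partial>M) =
      measure (distr M (Q \<Otimes>\<^sub>M T) (\<lambda>\<omega>. (V \<omega>, U \<omega>))) (C \<times> B)"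
    if U: "U \<in> measurable M T" and C: "C \<in> sets Q" for U C
  proof -
    have "(\<lambda>\<omega>. (V \<omega>, U \<omega>)) -` (C \<times> B) \<inter> space M = (V -` C \<inter> space M) \<inter> {\<omega>\<in>space M. U \<omega> \<in> B}"
      by auto
    then show ?thesis
      using V U B C
      by (simp add: measure_distr set_lebesgue_integral_def indicator_inter_arith[symmetric] Int_absorb1)
  qed
  have int: "integrable M (indicator {\<omega>\<in>space M. U \<omega> \<in> B} :: 'a \<Rightarrow> real)"
    if "U \<in> measurable M T" for U
    using that B by (intro integrable_real_indicator) (auto simp: emeasure_eq_measure)
  show ?thesis
  proof (rule real_cond_exp_charact)
    fix A assume A: "A \<in> sets ?F"
    then obtain C where "C \<in> sets Q" "A = V -` C \<inter> space M"
      using V by (auto simp: sets_vimage_algebra2 measurable_def)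
    then have "(\<integral>\<omega>\<in>A. indicator {\<omega>\<in>space M. Z \<omega> \<in> B} \<omega> \<partial>M) =
        (\<integral>\<omega>\<in>A. (indicator {\<omega>\<in>space M. Z' \<omega> \<in> B} \<omega> :: real) \<partial>M)"
      using set_integral[OF Z] set_integral[OF Z'] law by simp
    also have "\<dots> = (\<integral>\<omega>\<in>A. real_cond_exp M ?F (indicator {\<omega>\<in>space M. Z' \<omega> \<in> B}) \<omega> \<partial>M)"
      by (rule real_cond_exp_intA[OF int[OF Z'] A])
    finally show "(\<integral>\<omega>\<in>A. indicator {\<omega>\<in>space M. Z \<omega> \<in> B} \<omega> \<partial>M) =
        (\<integral>\<omega>\<in>A. real_cond_exp M ?F (indicator {\<omega>\<in>space M. Z' \<omega> \<in> B}) \<omega> \<partial>M)" .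
  qed (use int[OF Z] int[OF Z'] in auto)
qed

lemma (in prob_space) distr_pair_eq_of_indep_var:
  assumes "indep_var S X T Y" "indep_var S X T Z" "distr M T Y = distr M T Z"
  shows "distr M (S \<Otimes>\<^sub>M T) (\<lambda>\<omega>. (X \<omega>, Y \<omega>)) = distr M (S \<Otimes>\<^sub>M T) (\<lambda>\<omega>. (X \<omega>, Z \<omega>))"
  using assms by (simp add: indep_var_distribution_eq)

definition flip_after :: "nat \<Rightarrow> (nat \<Rightarrow> 'a \<Rightarrow> real) \<Rightarrow> nat \<Rightarrow> 'a \<Rightarrow> real" where
  "flip_after k W i \<omega> = (if k < i then 1 - W i \<omega> else W i \<omega>)"

lemma Xev_flip_after:
  "Xev Y (flip_after k W) i \<omega> = (if k < i then - Xev Y W i \<omega> else Xev Y W i \<omega>)"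
  by (simp add: Xev_def flip_after_def algebra_simps)

lemma Ssum_cong:
  assumes "\<And>i. i \<in> {1..n} \<Longrightarrow> Y i \<omega> = Y' i \<omega>' \<and> W i \<omega> = W' i \<omega>'"
  shows "Ssum Y W n \<omega> = Ssum Y' W' n \<omega>'"
  using assms unfolding Ssum_def Xev_def by (intro sum.cong) auto

lemma Ssum_flip_after:
  assumes "j \<le> k"
  shows "Ssum Y (flip_after k W) j \<omega> = Ssum Y W j \<omega>"
  using assms unfolding Ssum_def by (intro sum.cong) (auto simp: Xev_flip_after)

lemma Ssum_diff:
  assumes "k \<le> N"
  shows "Ssum Y W N \<omega> - Ssum Y W k \<omega> = (\<Sum>i\<in>{k<..N}. Xev Y W i \<omega>)"
proof -
  have "{1..N} = {1..k} \<union> {k<..N}"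
    using assms by auto
  then show ?thesis
    unfolding Ssum_def by (simp only:) (subst sum.union_disjoint, auto)
qed

lemma Ssum_diff_flip_after:
  assumes "k \<le> N"
  shows "Ssum Y (flip_after k W) N \<omega> - Ssum Y (flip_after k W) k \<omega> = - (Ssum Y W N \<omega> - Ssum Y W k \<omega>)"
  using assms by (simp add: Ssum_diff Xev_flip_after flip: sum_negf)

lemma Ssum_past_increment_flip_after:
  assumes "k \<le> N"
  shows "(\<lambda>i\<in>{1..k}. Ssum Y (flip_after k W) i \<omega>,
      Ssum Y (flip_after k W) N \<omega> - Ssum Y (flip_after k W) k \<omega>) =
    (\<lambda>i\<in>{1..k}. Ssum Y W i \<omega>, - (Ssum Y W N \<omega> - Ssum Y W k \<omega>))"
  by (simp only: Ssum_diff_flip_after[OF assms]) (simp add: Ssum_flip_after cong: restrict_cong)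

lemma borel_measurable_Ssum:
  assumes "\<And>i. i \<in> {1..n} \<Longrightarrow> Y i \<in> borel_measurable M"
    and "\<And>i. i \<in> {1..n} \<Longrightarrow> W i \<in> borel_measurable M"
  shows "Ssum Y W n \<in> borel_measurable M"
  unfolding Ssum_def[abs_def] Xev_def using assms by (intro borel_measurable_sum) measurable

lemma borel_measurable_flip_after:
  assumes "W i \<in> borel_measurable M"
  shows "flip_after k W i \<in> borel_measurable M"
  using assms by (cases "k < i") (simp_all add: flip_after_def[abs_def] borel_measurable_diff)

lemma (in prob_space) distr_assignments_flip_after:
  assumes W_rv: "\<And>i. i \<in> {1..N} \<Longrightarrow> W i \<in> borel_measurable M"
    and W_01: "\<And>i \<omega>. i \<in> {1..N} \<Longrightarrow> \<omega> \<in> space M \<Longrightarrow> W i \<omega> \<in> {0, 1}"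
    and A1: "assumption1 M W"
  shows "distr M (PiM {1..N} (\<lambda>_. borel)) (\<lambda>\<omega>. \<lambda>i\<in>{1..N}. W i \<omega>) =
    distr M (PiM {1..N} (\<lambda>_. borel)) (\<lambda>\<omega>. \<lambda>i\<in>{1..N}. flip_after k W i \<omega>)"
proof (rule distr_eq_of_finite_values)
  let ?S = "PiE {1..N} (\<lambda>_. {0, 1::real})"
  show "(\<lambda>\<omega>. \<lambda>i\<in>{1..N}. W i \<omega>) \<in> measurable M (PiM {1..N} (\<lambda>_. borel))"
    by (rule measurable_restrict) (rule W_rv)
  show "(\<lambda>\<omega>. \<lambda>i\<in>{1..N}. flip_after k W i \<omega>) \<in> measurable M (PiM {1..N} (\<lambda>_. borel))"
    by (rule measurable_restrict) (rule borel_measurable_flip_after[OF W_rv])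
  show "finite ?S"
    by (simp add: finite_PiE)
  show "(\<lambda>\<omega>. \<lambda>i\<in>{1..N}. W i \<omega>) ` space M \<subseteq> ?S"
    "(\<lambda>\<omega>. \<lambda>i\<in>{1..N}. flip_after k W i \<omega>) ` space M \<subseteq> ?S"
    using W_01 by (fastforce simp: flip_after_def)+
  show "{s} \<in> sets (PiM {1..N} (\<lambda>_. borel))" if "s \<in> ?S" for s
    using that PiE_singleton[of s "{1..N}"] sets_PiM_I_finite[of "{1..N}" "\<lambda>i. {s i}"]
    by (simp add: PiE_iff)
  show "emeasure M {\<omega>\<in>space M. (\<lambda>i\<in>{1..N}. W i \<omega>) = s} =
      emeasure M {\<omega>\<in>space M. (\<lambda>i\<in>{1..N}. flip_after k W i \<omega>) = s}" if s: "s \<in> ?S" for s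
  proof -
    \<comment> \<open>Assumption 1 on the block \<open>{k+1..N}\<close>, for \<open>s\<close> flipped after \<open>k\<close>; it also demands a
      0/1 value outside \<open>{1..N}\<close>, hence the 0 there.\<close>
    define t where "t i = (if i \<in> {1..N} then if k < i then 1 - s i else s i else 0)" for i
    have "\<forall>i. t i \<in> {0, 1}"
      using s by (auto simp: t_def)
    then have "measure M {\<omega>\<in>space M. \<forall>i\<in>{1..N}. W i \<omega> = t i} =
        measure M {\<omega>\<in>space M. \<forall>i\<in>{1..N}. W i \<omega> = (if k + 1 \<le> i \<and> i \<le> N then 1 - t i else t i)}"
      using A1[unfolded assumption1_def, rule_format, of "k + 1" N N t] by simp
    moreover have "{\<omega>\<in>space M. \<forall>i\<in>{1..N}. W i \<omega> = t i} =
        {\<omega>\<in>space M. (\<lambda>i\<in>{1..N}. flip_after k W i \<omega>) = s}"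
      using s by (auto simp: t_def flip_after_def PiE_iff extensional_def fun_eq_iff)
    moreover have "{\<omega>\<in>space M. \<forall>i\<in>{1..N}. W i \<omega> = (if k + 1 \<le> i \<and> i \<le> N then 1 - t i else t i)} =
        {\<omega>\<in>space M. (\<lambda>i\<in>{1..N}. W i \<omega>) = s}"
      using s by (auto simp: t_def PiE_iff extensional_def fun_eq_iff)
    ultimately show ?thesis
      by (simp add: emeasure_eq_measure)
  qed
qed

lemma (in prob_space) distr_outcomes_assignments_flip_after:
  fixes Y W :: "nat \<Rightarrow> 'a \<Rightarrow> real" and k N :: nat
  defines "P \<equiv> PiM {1..N} (\<lambda>_. borel :: real measure)"
  assumes W_rv: "\<And>i. i \<in> {1..N} \<Longrightarrow> W i \<in> borel_measurable M"
    and W_01: "\<And>i \<omega>. i \<in> {1..N} \<Longrightarrow> \<omega> \<in> space M \<Longrightarrow> W i \<omega> \<in> {0, 1}"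
    and A1: "assumption1 M W"
    and indep: "indep_var (PiM {1..} (\<lambda>_. borel)) (\<lambda>\<omega>. \<lambda>i\<in>{1..}. Y i \<omega>)
      (PiM {1..} (\<lambda>_. borel)) (\<lambda>\<omega>. \<lambda>i\<in>{1..}. W i \<omega>)"
  shows "distr M (P \<Otimes>\<^sub>M P) (\<lambda>\<omega>. (\<lambda>i\<in>{1..N}. Y i \<omega>, \<lambda>i\<in>{1..N}. W i \<omega>)) =
    distr M (P \<Otimes>\<^sub>M P) (\<lambda>\<omega>. (\<lambda>i\<in>{1..N}. Y i \<omega>, \<lambda>i\<in>{1..N}. flip_after k W i \<omega>))"
proof (rule distr_pair_eq_of_indep_var)
  have indep_restrict: "indep_var P (\<lambda>\<omega>. \<lambda>i\<in>{1..N}. Y i \<omega>) P (\<lambda>\<omega>. g (\<lambda>i\<in>{1..}. W i \<omega>))"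
    if "g \<in> measurable (PiM {1..} (\<lambda>_. borel)) P" for g
    using indep_var_compose[OF indep measurable_restrict_subset[of "{1..N}" "{1..}"] that]
    unfolding P_def by (simp add: comp_def)
  show "indep_var P (\<lambda>\<omega>. \<lambda>i\<in>{1..N}. Y i \<omega>) P (\<lambda>\<omega>. \<lambda>i\<in>{1..N}. W i \<omega>)"
    using indep_restrict[of "\<lambda>f. restrict f {1..N}"]
    unfolding P_def by (simp add: measurable_restrict_subset)
  have "(\<lambda>\<omega>. \<lambda>i\<in>{1..N}. flip_after k W i \<omega>) =
      (\<lambda>\<omega>. (\<lambda>w. \<lambda>i\<in>{1..N}. if k < i then 1 - w i else w i) (\<lambda>i\<in>{1..}. W i \<omega>))"
    by (auto simp: flip_after_def fun_eq_iff)
  then show "indep_var P (\<lambda>\<omega>. \<lambda>i\<in>{1..N}. Y i \<omega>) P (\<lambda>\<omega>. \<lambda>i\<in>{1..N}. flip_after k W i \<omega>)"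
    unfolding P_def by (simp only:) (rule indep_restrict[unfolded P_def], measurable)
  show "distr M P (\<lambda>\<omega>. \<lambda>i\<in>{1..N}. W i \<omega>) = distr M P (\<lambda>\<omega>. \<lambda>i\<in>{1..N}. flip_after k W i \<omega>)"
    unfolding P_def using W_rv W_01 A1 by (rule distr_assignments_flip_after)
qed

lemma distr_Ssum_past_increment_eq:
  fixes Y W Y' W' :: "nat \<Rightarrow> 'a \<Rightarrow> real" and k N :: nat
  defines "P \<equiv> PiM {1..N} (\<lambda>_. borel :: real measure)"
  assumes "k \<le> N"
    and rv: "\<And>i. i \<in> {1..N} \<Longrightarrow>
      Y i \<in> borel_measurable M \<and> W i \<in> borel_measurable M \<and>
      Y' i \<in> borel_measurable M \<and> W' i \<in> borel_measurable M"
    and law: "distr M (P \<Otimes>\<^sub>M P) (\<lambda>\<omega>. (\<lambda>i\<in>{1..N}. Y i \<omega>, \<lambda>i\<in>{1..N}. W i \<omega>)) =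
      distr M (P \<Otimes>\<^sub>M P) (\<lambda>\<omega>. (\<lambda>i\<in>{1..N}. Y' i \<omega>, \<lambda>i\<in>{1..N}. W' i \<omega>))"
  shows "distr M (PiM {1..k} (\<lambda>_. borel) \<Otimes>\<^sub>M borel)
      (\<lambda>\<omega>. (\<lambda>i\<in>{1..k}. Ssum Y W i \<omega>, Ssum Y W N \<omega> - Ssum Y W k \<omega>)) =
    distr M (PiM {1..k} (\<lambda>_. borel) \<Otimes>\<^sub>M borel)
      (\<lambda>\<omega>. (\<lambda>i\<in>{1..k}. Ssum Y' W' i \<omega>, Ssum Y' W' N \<omega> - Ssum Y' W' k \<omega>))"
proof -
  have YW: "(\<lambda>\<omega>. (\<lambda>i\<in>{1..N}. Y i \<omega>, \<lambda>i\<in>{1..N}. W i \<omega>)) \<in> measurable M (P \<Otimes>\<^sub>M P)"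
    and YW': "(\<lambda>\<omega>. (\<lambda>i\<in>{1..N}. Y' i \<omega>, \<lambda>i\<in>{1..N}. W' i \<omega>)) \<in> measurable M (P \<Otimes>\<^sub>M P)"
    unfolding P_def using rv by (auto intro!: measurable_Pair measurable_restrict)
  \<comment> \<open>\<open>Ssum\<close> of the coordinate processes on the product space writes the statistic as a
    measurable function \<open>g\<close> of the first \<open>N\<close> outcomes and assignments.\<close>
  let ?Yc = "\<lambda>i (p :: (nat \<Rightarrow> real) \<times> (nat \<Rightarrow> real)). fst p i"
  let ?Wc = "\<lambda>i (p :: (nat \<Rightarrow> real) \<times> (nat \<Rightarrow> real)). snd p i"
  define g where "g p = (\<lambda>i\<in>{1..k}. Ssum ?Yc ?Wc i p, Ssum ?Yc ?Wc N p - Ssum ?Yc ?Wc k p)" for p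
  have coords: "?Yc i \<in> borel_measurable (P \<Otimes>\<^sub>M P)" "?Wc i \<in> borel_measurable (P \<Otimes>\<^sub>M P)"
    if "i \<in> {1..N}" for i
    using that unfolding P_def by measurable
  have g: "g \<in> measurable (P \<Otimes>\<^sub>M P) (PiM {1..k} (\<lambda>_. borel) \<Otimes>\<^sub>M borel)"
    unfolding g_def using \<open>k \<le> N\<close> coords
    by (intro measurable_Pair measurable_restrict borel_measurable_diff borel_measurable_Ssum) auto
  have factor: "(\<lambda>i\<in>{1..k}. Ssum U V i \<omega>, Ssum U V N \<omega> - Ssum U V k \<omega>) =
      g (\<lambda>i\<in>{1..N}. U i \<omega>, \<lambda>i\<in>{1..N}. V i \<omega>)" for U V :: "nat \<Rightarrow> 'a \<Rightarrow> real" and \<omega>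
  proof -
    have "Ssum U V j \<omega> = Ssum ?Yc ?Wc j (\<lambda>i\<in>{1..N}. U i \<omega>, \<lambda>i\<in>{1..N}. V i \<omega>)" if "j \<le> N" for j
      using that by (intro Ssum_cong) auto
    then show ?thesis
      unfolding g_def using \<open>k \<le> N\<close> by (auto intro!: restrict_ext)
  qed
  show ?thesis
    unfolding factor using distr_distr[OF g YW, symmetric] distr_distr[OF g YW', symmetric] law
    by (simp add: comp_def)
qed

theorem lemma1:
  fixes M :: "'a measure" and Y W :: "nat \<Rightarrow> 'a \<Rightarrow> real"
  assumes "prob_space M"
    and Y_rv: "\<And>i. i \<ge> 1 \<Longrightarrow> Y i \<in> borel_measurable M"
    and W_rv: "\<And>i. i \<ge> 1 \<Longrightarrow> W i \<in> borel_measurable M"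
    and W_01: "\<And>i \<omega>. i \<ge> 1 \<Longrightarrow> \<omega> \<in> space M \<Longrightarrow> W i \<omega> \<in> {0, 1}"
    and A1: "assumption1 M W"
    and H0_indep: "prob_space.indep_var M
                     (PiM {1..} (\<lambda>_. borel)) (\<lambda>\<omega>. \<lambda>i\<in>{1..}. Y i \<omega>)
                     (PiM {1..} (\<lambda>_. borel)) (\<lambda>\<omega>. \<lambda>i\<in>{1..}. W i \<omega>)"
    and H0_half: "\<And>i. i \<ge> 1 \<Longrightarrow> measure M {\<omega>\<in>space M. W i \<omega> = 1} = 1/2"
    and "1 \<le> k" and "k \<le> N"
    and B: "B \<in> sets borel"
  shows "AE \<omega> in M.
           real_cond_exp M (sigmaS M Y W k)
             (indicator {\<omega>\<in>space M. Ssum Y W N \<omega> - Ssum Y W k \<omega> \<in> B}) \<omega>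
         = real_cond_exp M (sigmaS M Y W k)
             (indicator {\<omega>\<in>space M. - (Ssum Y W N \<omega> - Ssum Y W k \<omega>) \<in> B}) \<omega>"
proof -
  interpret prob_space M by fact
  let ?P = "PiM {1..N} (\<lambda>_. borel :: real measure)"
  let ?Q = "PiM {1..k} (\<lambda>_. borel :: real measure) \<Otimes>\<^sub>M (borel :: real measure)"
  have "distr M (?P \<Otimes>\<^sub>M ?P) (\<lambda>\<omega>. (\<lambda>i\<in>{1..N}. Y i \<omega>, \<lambda>i\<in>{1..N}. W i \<omega>)) =
      distr M (?P \<Otimes>\<^sub>M ?P) (\<lambda>\<omega>. (\<lambda>i\<in>{1..N}. Y i \<omega>, \<lambda>i\<in>{1..N}. flip_after k W i \<omega>))"
    using W_rv W_01 A1 H0_indep by (intro distr_outcomes_assignments_flip_after) auto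
  then have "distr M ?Q (\<lambda>\<omega>. (\<lambda>i\<in>{1..k}. Ssum Y W i \<omega>, Ssum Y W N \<omega> - Ssum Y W k \<omega>)) =
      distr M ?Q (\<lambda>\<omega>. (\<lambda>i\<in>{1..k}. Ssum Y (flip_after k W) i \<omega>,
        Ssum Y (flip_after k W) N \<omega> - Ssum Y (flip_after k W) k \<omega>))"
    using \<open>k \<le> N\<close> Y_rv W_rv
    by (intro distr_Ssum_past_increment_eq) (auto intro: borel_measurable_flip_after)
  then have law: "distr M ?Q (\<lambda>\<omega>. (\<lambda>i\<in>{1..k}. Ssum Y W i \<omega>, Ssum Y W N \<omega> - Ssum Y W k \<omega>)) =
      distr M ?Q (\<lambda>\<omega>. (\<lambda>i\<in>{1..k}. Ssum Y W i \<omega>, - (Ssum Y W N \<omega> - Ssum Y W k \<omega>)))"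
    unfolding Ssum_past_increment_flip_after[OF \<open>k \<le> N\<close>] .
  have [measurable]: "Ssum Y W j \<in> borel_measurable M" for j
    using Y_rv W_rv by (intro borel_measurable_Ssum) auto
  from law show ?thesis
    unfolding sigmaS_def using B by (intro real_cond_exp_indicator_eq_of_distr_pair_eq) auto
qed

end
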